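(* Let $R=\mathbb{F}_q+v\mathbb{F}_q+v^2\mathbb{F}_q$ with $v^3=v$, and let $M$ be an $n\times n$ circulant matrix over $R$. Then $G=(I_n\mid M)$ generates an isodual code, and hence a formally self-dual code, over $R$ (of length $2n$).
   Context: $q$ is a prime power and $R=\mathbb{F}_q[v]/\langle v^3-v\rangle$. A circulant matrix is one in which each row is the cyclic shift one position to the right of the previous row. A linear code of length $N$ over $R$ is an $R$-submodule of $R^N$; $C^\perp=\{x\in R^N:\sum x_iy_i=0\ \forall y\in C\}$. Two codes are equivalent if one is obtained from the other by a permutation of coordinates combined with multiplication of coordinates by units of $R$. $C$ is isodual if $C$ is equivalent to $C^\perp$. For $c\in R^N$ written uniquely as $a_0+va_1+v^2a_2$ with $a_i\in\mathbb{F}_q^N$, the Gray map is $\Psi(c)=(a_0,a_0+a_2,a_1)$ and the Lee weight $w_L(c)$ is the Hamming weight of $\Psi(c)$. $C$ is formally self-dual if $C$ and $C^\perp$ have the same Lee weight enumerator $\sum_c X^{3N-w_L(c)}Y^{w_L(c)}$. *)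

theory Defs
  imports "HOL-Combinatorics.Permutations"
begin

text \<open>An element VR a0 a1 a2 stands for a0 + v a1 + v^2 a2 (unique representation).\<close>

datatype 'a vring = VR 'a 'a 'a

fun c0 :: "'a vring \<Rightarrow> 'a" where "c0 (VR a b c) = a"
fun c1 :: "'a vring \<Rightarrow> 'a" where "c1 (VR a b c) = b"
fun c2 :: "'a vring \<Rightarrow> 'a" where "c2 (VR a b c) = c"

lemma vring_eq_iff: "x = y \<longleftrightarrow> c0 x = c0 y \<and> c1 x = c1 y \<and> c2 x = c2 y"
  by (cases x; cases y) auto

instantiation vring :: (comm_ring_1) comm_ring_1
begin

definition "0 = VR 0 0 0"
definition "1 = VR 1 0 0"
definition "x + y = VR (c0 x + c0 y) (c1 x + c1 y) (c2 x + c2 y)"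
definition "x - y = VR (c0 x - c0 y) (c1 x - c1 y) (c2 x - c2 y)"
definition "- x = VR (- c0 x) (- c1 x) (- c2 x)"
text \<open>Multiplication using v^3 = v (so v^4 = v^2).\<close>
definition "x * y = VR (c0 x * c0 y)
   (c0 x * c1 y + c1 x * c0 y + c1 x * c2 y + c2 x * c1 y)
   (c0 x * c2 y + c2 x * c0 y + c1 x * c1 y + c2 x * c2 y)"

instance
  by standard (simp_all add: vring_eq_iff zero_vring_def one_vring_def plus_vring_def
      minus_vring_def uminus_vring_def times_vring_def algebra_simps)

end

definition vv :: "'a::comm_ring_1 vring" where "vv = VR 0 1 0"

definition vecs :: "nat \<Rightarrow> (nat \<Rightarrow> 'a::comm_ring_1 vring) set" where
  "vecs N = {x. \<forall>i\<ge>N. x i = 0}"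

definition linear_code :: "nat \<Rightarrow> (nat \<Rightarrow> 'a::comm_ring_1 vring) set \<Rightarrow> bool" where
  "linear_code N C \<longleftrightarrow> C \<subseteq> vecs N \<and> (\<lambda>i. 0) \<in> C \<and>
     (\<forall>x\<in>C. \<forall>y\<in>C. (\<lambda>i. x i + y i) \<in> C) \<and>
     (\<forall>r. \<forall>x\<in>C. (\<lambda>i. r * x i) \<in> C)"

definition dual_code :: "nat \<Rightarrow> (nat \<Rightarrow> 'a::comm_ring_1 vring) set \<Rightarrow> (nat \<Rightarrow> 'a vring) set" where
  "dual_code N C = {x \<in> vecs N. \<forall>y\<in>C. (\<Sum>i<N. x i * y i) = 0}"

definition equiv_codes :: "nat \<Rightarrow> (nat \<Rightarrow> 'a::comm_ring_1 vring) set \<Rightarrow> (nat \<Rightarrow> 'a vring) set \<Rightarrow> bool" where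
  "equiv_codes N C D \<longleftrightarrow> (\<exists>\<sigma> u. \<sigma> permutes {..<N} \<and> (\<forall>i<N. u i dvd 1) \<and>
      D = (\<lambda>c. \<lambda>i. if i < N then u i * c (\<sigma> i) else 0) ` C)"

definition isodual :: "nat \<Rightarrow> (nat \<Rightarrow> 'a::comm_ring_1 vring) set \<Rightarrow> bool" where
  "isodual N C \<longleftrightarrow> linear_code N C \<and> equiv_codes N C (dual_code N C)"

text \<open>Lee weight = Hamming weight of the Gray image (a0, a0 + a2, a1).\<close>
definition lee_weight :: "nat \<Rightarrow> (nat \<Rightarrow> 'a::comm_ring_1 vring) \<Rightarrow> nat" where
  "lee_weight N c = card {i. i < N \<and> c0 (c i) \<noteq> 0}
                  + card {i. i < N \<and> c0 (c i) + c2 (c i) \<noteq> 0}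
                  + card {i. i < N \<and> c1 (c i) \<noteq> 0}"

text \<open>Equality of Lee weight enumerators sum_c X^(3N - wL c) Y^(wL c), i.e. equality of
  all their coefficients (the number of codewords of each Lee weight).\<close>
definition formally_self_dual :: "nat \<Rightarrow> (nat \<Rightarrow> 'a::comm_ring_1 vring) set \<Rightarrow> bool" where
  "formally_self_dual N C \<longleftrightarrow>
     (\<forall>w. card {c \<in> C. lee_weight N c = w} = card {c \<in> dual_code N C. lee_weight N c = w})"

definition circulant :: "nat \<Rightarrow> (nat \<Rightarrow> nat \<Rightarrow> 'a) \<Rightarrow> bool" where
  "circulant n M \<longleftrightarrow> (\<forall>i j. i + 1 < n \<and> j < n \<longrightarrow> M (i + 1) ((j + 1) mod n) = M i j)"

text \<open>The matrix (I_n | M), n rows and 2n columns.\<close>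
definition id_aug :: "nat \<Rightarrow> (nat \<Rightarrow> nat \<Rightarrow> 'a::comm_ring_1) \<Rightarrow> nat \<Rightarrow> nat \<Rightarrow> 'a" where
  "id_aug n M i j = (if j < n then (if i = j then 1 else 0) else M i (j - n))"

definition gen_code :: "nat \<Rightarrow> nat \<Rightarrow> (nat \<Rightarrow> nat \<Rightarrow> 'a::comm_ring_1 vring) \<Rightarrow> (nat \<Rightarrow> 'a vring) set" where
  "gen_code k N G = {(\<lambda>j. if j < N then (\<Sum>i<k. x i * G i j) else 0) | x. True}"

end

theory Submission
  imports Defs
begin

text \<open>The code generated by \<open>(I | M)\<close> consists of the words \<open>(a, aM)\<close>, and its dual is the set
  of words \<open>(y, z)\<close> with \<open>y + Mz = 0\<close>. For circulant \<open>M\<close> the index reflection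
  \<open>\<rho> k = -k mod n\<close> transposes \<open>M\<close>: \<open>M k (\<rho> l) = M l (\<rho> k)\<close>. Hence the monomial map
  \<open>(a, b) \<mapsto> (-b \<circ> \<rho>, a \<circ> \<rho>)\<close> sends \<open>(a, aM)\<close> to a dual word, and every dual word arises
  this way, so the dual is the image of the code under a coordinate permutation with signs \<open>\<plusminus>1\<close>.
  Negation only changes signs of the Gray image coordinates, so this equivalence also preserves
  Lee weights, which gives formal self-duality.\<close>

definition reflect :: "nat \<Rightarrow> nat \<Rightarrow> nat" where
  "reflect n k = (n - k) mod n"

lemma reflect_less: "k < n \<Longrightarrow> reflect n k < n"
  by (simp add: reflect_def)

lemma reflect_reflect: "k < n \<Longrightarrow> reflect n (reflect n k) = k"
  by (cases "k = 0") (auto simp: reflect_def)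

lemma sum_reflect: "(\<Sum>j<n. f (reflect n j)) = (\<Sum>j<n. f j)"
proof -
  have "bij_betw (reflect n) {..<n} {..<n}"
    by (rule bij_betwI[where g = "reflect n"]) (auto simp: reflect_less reflect_reflect)
  thus ?thesis by (rule sum.reindex_bij_betw)
qed

lemma circulant_shift:
  assumes "circulant n M" "i < n" "j < n"
  shows "M i ((j + i) mod n) = M 0 j"
  using assms(2)
proof (induction i)
  case (Suc i)
  have "M (Suc i) ((j + Suc i) mod n) = M (i + 1) (((j + i) mod n + 1) mod n)"
    by (simp add: mod_Suc_eq)
  also have "\<dots> = M i ((j + i) mod n)"
    using assms(1) Suc.prems assms(3) unfolding circulant_def by simp
  finally show ?case using Suc by simp
qed (use assms(3) in simp)

lemma circulant_eq_first_row:
  assumes "circulant n M" "i < n" "j < n"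
  shows "M i j = M 0 ((j + (n - i)) mod n)"
proof -
  have "((j + (n - i)) mod n + i) mod n = j"
    using assms(2,3) by (simp add: mod_add_left_eq)
  with circulant_shift[OF assms(1,2), of "(j + (n - i)) mod n"] assms(2) show ?thesis
    by simp
qed

text \<open>Entries of a circulant matrix depend only on \<open>j - i mod n\<close>, and both sides have
  index difference \<open>-(i + k) mod n\<close>.\<close>

lemma circulant_reflect_sym:
  assumes "circulant n M" "i < n" "k < n"
  shows "M i (reflect n k) = M k (reflect n i)"
proof -
  have "M i (reflect n k) = M 0 ((n - k + (n - i)) mod n)"
    using circulant_eq_first_row[OF assms(1,2) reflect_less[OF assms(3)]]
    by (simp add: reflect_def mod_add_left_eq)
  also have "\<dots> = M k (reflect n i)"
    using circulant_eq_first_row[OF assms(1,3) reflect_less[OF assms(2)]]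
    by (simp add: reflect_def mod_add_right_eq add.commute)
  finally show ?thesis .
qed

lemma circulant_sum_reflect:
  fixes M :: "nat \<Rightarrow> nat \<Rightarrow> 'a::comm_semiring_1"
  assumes "circulant n M" "k < n"
  shows "(\<Sum>j<n. M k j * f (reflect n j)) = (\<Sum>l<n. f l * M l (reflect n k))"
proof -
  have "(\<Sum>j<n. M k j * f (reflect n j)) = (\<Sum>l<n. M k (reflect n l) * f (reflect n (reflect n l)))"
    by (rule sum_reflect[symmetric])
  also have "\<dots> = (\<Sum>l<n. f l * M l (reflect n k))"
    by (rule sum.cong) (auto simp: reflect_reflect circulant_reflect_sym[OF assms(1) _ assms(2)] mult.commute)
  finally show ?thesis .
qed

lemma linear_code_gen_code: "linear_code N (gen_code k N G)"
proof -
  let ?w = "\<lambda>x j. if j < N then (\<Sum>i<k. x i * G i j) else 0"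
  have "(\<lambda>j. ?w x j + ?w y j) = ?w (\<lambda>i. x i + y i)" for x y
    by (simp add: fun_eq_iff distrib_right sum.distrib)
  moreover have "(\<lambda>j. r * ?w x j) = ?w (\<lambda>i. r * x i)" for r x
    by (simp add: fun_eq_iff sum_distrib_left mult.assoc)
  moreover have "(\<lambda>j. 0) = ?w (\<lambda>i. 0)"
    by (simp add: fun_eq_iff)
  ultimately show ?thesis
    unfolding linear_code_def gen_code_def vecs_def by (auto 0 4)
qed

lemma dual_code_gen_code:
  "dual_code N (gen_code k N G) = {y \<in> vecs N. \<forall>i<k. (\<Sum>j<N. G i j * y j) = 0}"
proof -
  have inner: "(\<Sum>j<N. y j * (\<Sum>i<k. x i * G i j))
      = (\<Sum>i<k. x i * (\<Sum>j<N. G i j * y j))" for x y :: "nat \<Rightarrow> 'a vring"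
  proof -
    have "(\<Sum>j<N. y j * (\<Sum>i<k. x i * G i j)) = (\<Sum>j<N. \<Sum>i<k. x i * (G i j * y j))"
      by (simp add: sum_distrib_left mult_ac)
    also have "\<dots> = (\<Sum>i<k. x i * (\<Sum>j<N. G i j * y j))"
      by (subst sum.swap) (simp add: sum_distrib_left)
    finally show ?thesis .
  qed
  have rows: "(\<forall>x. (\<Sum>i<k. x i * (\<Sum>j<N. G i j * y j)) = 0) \<longleftrightarrow> (\<forall>i<k. (\<Sum>j<N. G i j * y j) = 0)"
    for y :: "nat \<Rightarrow> 'a vring"
  proof safe
    fix i assume all: "\<forall>x. (\<Sum>i<k. x i * (\<Sum>j<N. G i j * y j)) = 0" and "i < k"
    from all have "(\<Sum>l<k. of_bool (l = i) * (\<Sum>j<N. G l j * y j)) = 0"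
      by (rule spec[where x = "\<lambda>l. of_bool (l = i)"])
    then show "(\<Sum>j<N. G i j * y j) = 0"
      using \<open>i < k\<close> by simp
  qed simp
  have "dual_code N (gen_code k N G)
      = {y \<in> vecs N. \<forall>x. (\<Sum>i<k. x i * (\<Sum>j<N. G i j * y j)) = 0}"
    unfolding dual_code_def gen_code_def by (auto simp: inner)
  then show ?thesis
    by (simp add: rows)
qed

lemma sum_lessThan_add:
  "(\<Sum>i<m + n. f i) = (\<Sum>i<m. f i) + (\<Sum>i<n. f (m + i) :: 'a::comm_monoid_add)"
  for m n :: nat
  by (induction n) (simp_all add: add_ac)

lemma id_aug_row_sum:
  assumes "k < n"
  shows "(\<Sum>j<2 * n. id_aug n M k j * y j) = y k + (\<Sum>j<n. M k j * y (n + j))"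
proof -
  have "(\<Sum>j<n. id_aug n M k j * y j) = (\<Sum>j<n. if j = k then y j else 0)"
    by (rule sum.cong) (auto simp: id_aug_def)
  moreover have "(\<Sum>j<n. id_aug n M k (n + j) * y (n + j)) = (\<Sum>j<n. M k j * y (n + j))"
    by (simp add: id_aug_def)
  ultimately show ?thesis
    using assms by (simp add: mult_2 sum_lessThan_add)
qed

definition encode :: "nat \<Rightarrow> (nat \<Rightarrow> nat \<Rightarrow> 'a::comm_ring_1 vring) \<Rightarrow> (nat \<Rightarrow> 'a vring) \<Rightarrow> nat \<Rightarrow> 'a vring" where
  "encode n M a j = (if j < n then a j else if j < 2 * n then (\<Sum>i<n. a i * M i (j - n)) else 0)"

lemma gen_code_id_aug: "gen_code n (2 * n) (id_aug n M) = range (encode n M)"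
proof -
  have "(\<lambda>j. if j < 2 * n then \<Sum>i<n. a i * id_aug n M i j else 0) = encode n M a" for a
  proof
    fix j
    have "j < n \<Longrightarrow> (\<Sum>i<n. a i * id_aug n M i j) = (\<Sum>i<n. if i = j then a i else 0)"
      by (rule sum.cong) (auto simp: id_aug_def)
    then show "(if j < 2 * n then \<Sum>i<n. a i * id_aug n M i j else 0) = encode n M a j"
      by (auto simp: encode_def id_aug_def)
  qed
  then show ?thesis
    unfolding gen_code_def by auto
qed

definition monomial_map :: "nat \<Rightarrow> (nat \<Rightarrow> 'a::comm_ring_1) \<Rightarrow> (nat \<Rightarrow> nat) \<Rightarrow> (nat \<Rightarrow> 'a) \<Rightarrow> nat \<Rightarrow> 'a" where
  "monomial_map N u \<sigma> c = (\<lambda>i. if i < N then u i * c (\<sigma> i) else 0)"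

lemma equiv_codes_monomial_image:
  assumes "\<sigma> permutes {..<N}" "\<forall>i<N. u i dvd 1"
  shows "equiv_codes N C (monomial_map N u \<sigma> ` C)"
  unfolding equiv_codes_def monomial_map_def using assms by blast

lemma unit_mult_cancel_left:
  fixes u :: "'a::comm_ring_1"
  assumes "u dvd 1" "u * a = u * b"
  shows "a = b"
proof -
  obtain w where "1 = u * w"
    using assms(1) by (rule dvdE)
  then have "a = w * (u * a)" and "b = w * (u * b)"
    by (simp_all add: mult_ac)
  with assms(2) show ?thesis
    by simp
qed

lemma inj_on_monomial_map:
  assumes \<sigma>: "\<sigma> permutes {..<N}" and units: "\<forall>i<N. u i dvd 1"
  shows "inj_on (monomial_map N u \<sigma>) (vecs N)"
proof (rule inj_onI, rule ext)
  fix c d j assume c: "c \<in> vecs N" and d: "d \<in> vecs N"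
    and eq: "monomial_map N u \<sigma> c = monomial_map N u \<sigma> d"
  show "c j = d j"
  proof (cases "j < N")
    case True
    let ?i = "inv \<sigma> j"
    have "?i < N" and "\<sigma> ?i = j"
      using True permutes_in_image[OF permutes_inv[OF \<sigma>]] permutes_inverses(1)[OF \<sigma>] by auto
    moreover have "monomial_map N u \<sigma> c ?i = monomial_map N u \<sigma> d ?i"
      by (simp add: eq)
    ultimately have "u ?i * c j = u ?i * d j"
      by (simp add: monomial_map_def)
    with \<open>?i < N\<close> units show ?thesis
      by (blast intro: unit_mult_cancel_left)
  next
    case False
    with c d show ?thesis
      by (simp add: vecs_def)
  qed
qed

lemma card_permutes_Collect:
  assumes "\<sigma> permutes {..<N}"
  shows "card {i. i < N \<and> Q (\<sigma> i)} = card {i. i < N \<and> Q i}"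
proof -
  have "bij_betw \<sigma> {i \<in> {..<N}. Q (\<sigma> i)} {i \<in> {..<N}. Q i}"
    using permutes_imp_bij[OF assms] by (rule bij_betw_Collect) simp
  then show ?thesis
    by (simp add: bij_betw_same_card)
qed

lemma lee_weight_monomial_map:
  fixes u :: "nat \<Rightarrow> 'a::comm_ring_1 vring"
  assumes \<sigma>: "\<sigma> permutes {..<N}" and u: "\<forall>i<N. u i = 1 \<or> u i = -1"
  shows "lee_weight N (monomial_map N u \<sigma> c) = lee_weight N c"
proof -
  have sign: "{i. i < N \<and> P (monomial_map N u \<sigma> c i)} = {i. i < N \<and> P (c (\<sigma> i))}"
    if "\<And>x. P (- x) = P x" for P :: "'a vring \<Rightarrow> bool"
    using u that by (auto simp: monomial_map_def)
  have neg: "c0 (- x) = - c0 x" "c1 (- x) = - c1 x" "c2 (- x) = - c2 x" for x :: "'a vring"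
    by (simp_all add: uminus_vring_def)
  have "{i. i < N \<and> c0 (monomial_map N u \<sigma> c i) \<noteq> 0} = {i. i < N \<and> c0 (c (\<sigma> i)) \<noteq> 0}"
    "{i. i < N \<and> c0 (monomial_map N u \<sigma> c i) + c2 (monomial_map N u \<sigma> c i) \<noteq> 0}
       = {i. i < N \<and> c0 (c (\<sigma> i)) + c2 (c (\<sigma> i)) \<noteq> 0}"
    "{i. i < N \<and> c1 (monomial_map N u \<sigma> c i) \<noteq> 0} = {i. i < N \<and> c1 (c (\<sigma> i)) \<noteq> 0}"
    by (rule sign; simp add: neg neg_eq_iff_add_eq_0)+
  then show ?thesis
    unfolding lee_weight_def
    using card_permutes_Collect[OF \<sigma>, of "\<lambda>j. c0 (c j) \<noteq> 0"]
      card_permutes_Collect[OF \<sigma>, of "\<lambda>j. c0 (c j) + c2 (c j) \<noteq> 0"]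
      card_permutes_Collect[OF \<sigma>, of "\<lambda>j. c1 (c j) \<noteq> 0"]
    by simp
qed

lemma formally_self_dual_if_dual_eq_image:
  assumes "dual_code N C = f ` C" "inj_on f C" "\<forall>c\<in>C. lee_weight N (f c) = lee_weight N c"
  shows "formally_self_dual N C"
  unfolding formally_self_dual_def
proof
  fix w
  have "{c \<in> dual_code N C. lee_weight N c = w} = f ` {c \<in> C. lee_weight N c = w}"
    using assms(1,3) by auto
  moreover have "inj_on f {c \<in> C. lee_weight N c = w}"
    using assms(2) by (rule inj_on_subset) blast
  ultimately show "card {c \<in> C. lee_weight N c = w} = card {c \<in> dual_code N C. lee_weight N c = w}"
    by (simp add: card_image)
qed

definition twist :: "nat \<Rightarrow> nat \<Rightarrow> nat" where
  "twist n i = (if i < n then n + reflect n i else if i < 2 * n then reflect n (i - n) else i)"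

lemma halves_cases:
  fixes i n :: nat
  obtains (lower) "i < n" | (upper) j where "j < n" "i = n + j" | (outside) "2 * n \<le> i"
proof -
  consider "i < n" | "n \<le> i" "i < 2 * n" | "2 * n \<le> i"
    by linarith
  then show ?thesis
    by cases (use that(2)[of "i - n"] in \<open>auto intro: that(1,3)\<close>)
qed

lemma twist_less: "i < 2 * n \<Longrightarrow> twist n i < 2 * n"
  by (cases rule: halves_cases[of i n]) (auto simp: twist_def reflect_less dest: reflect_less[where n = n])

lemma twist_twist: "twist n (twist n i) = i"
  by (cases rule: halves_cases[of i n]) (auto simp: twist_def reflect_less reflect_reflect)

lemma twist_permutes: "twist n permutes {..<2 * n}"
proof (rule bij_imp_permutes)
  show "bij_betw (twist n) {..<2 * n} {..<2 * n}"
    by (rule bij_betwI[where g = "twist n"]) (auto simp: twist_less twist_twist)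
qed (simp add: twist_def)

definition twist_map :: "nat \<Rightarrow> (nat \<Rightarrow> 'a::comm_ring_1) \<Rightarrow> nat \<Rightarrow> 'a" where
  "twist_map n = monomial_map (2 * n) (\<lambda>i. if i < n then -1 else 1) (twist n)"

lemma inj_on_twist_map: "inj_on (twist_map n) (vecs (2 * n))"
  unfolding twist_map_def by (rule inj_on_monomial_map[OF twist_permutes]) simp

lemma equiv_codes_twist_map_image: "equiv_codes (2 * n) C (twist_map n ` C)"
  unfolding twist_map_def by (rule equiv_codes_monomial_image[OF twist_permutes]) simp

lemma lee_weight_twist_map:
  "lee_weight (2 * n) (twist_map n (c :: nat \<Rightarrow> 'a::comm_ring_1 vring)) = lee_weight (2 * n) c"
  unfolding twist_map_def by (rule lee_weight_monomial_map[OF twist_permutes]) simp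

lemma twist_map_encode_lower:
  "i < n \<Longrightarrow> twist_map n (encode n M a) i = - (\<Sum>l<n. a l * M l (reflect n i))"
  by (simp add: twist_map_def monomial_map_def encode_def twist_def reflect_less)

lemma twist_map_encode_upper:
  "j < n \<Longrightarrow> twist_map n (encode n M a) (n + j) = a (reflect n j)"
  by (simp add: twist_map_def monomial_map_def encode_def twist_def reflect_less)

lemma twist_map_vecs: "twist_map n c \<in> vecs (2 * n)"
  by (simp add: twist_map_def monomial_map_def vecs_def)

lemma twist_map_encode_parity:
  assumes "circulant n M" "k < n"
  shows "twist_map n (encode n M a) k + (\<Sum>j<n. M k j * twist_map n (encode n M a) (n + j)) = 0"
proof -
  have "(\<Sum>j<n. M k j * twist_map n (encode n M a) (n + j)) = (\<Sum>j<n. M k j * a (reflect n j))"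
    by (simp add: twist_map_encode_upper)
  also have "\<dots> = (\<Sum>l<n. a l * M l (reflect n k))"
    by (rule circulant_sum_reflect[OF assms])
  finally show ?thesis
    using assms(2) by (simp add: twist_map_encode_lower)
qed

lemma parity_solution_eq_twist_map:
  assumes "circulant n M" "y \<in> vecs (2 * n)"
    and parity: "\<forall>k<n. y k + (\<Sum>j<n. M k j * y (n + j)) = 0"
  shows "twist_map n (encode n M (\<lambda>l. y (n + reflect n l))) = y"
proof
  fix i
  show "twist_map n (encode n M (\<lambda>l. y (n + reflect n l))) i = y i"
  proof (cases rule: halves_cases[of i n])
    case lower
    have "(\<Sum>l<n. y (n + reflect n l) * M l (reflect n i))
        = (\<Sum>j<n. M i j * y (n + reflect n (reflect n j)))"
      by (rule circulant_sum_reflect[OF assms(1) lower, symmetric])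
    also have "\<dots> = - y i"
      using parity lower by (simp add: reflect_reflect eq_neg_iff_add_eq_0 add.commute)
    finally show ?thesis
      using lower by (simp add: twist_map_encode_lower)
  next
    case (upper j)
    then show ?thesis
      by (simp add: twist_map_encode_upper reflect_reflect)
  next
    case outside
    with assms(2) show ?thesis
      by (simp add: twist_map_def monomial_map_def vecs_def)
  qed
qed

lemma dual_code_id_aug_circulant:
  assumes "circulant n M"
  shows "dual_code (2 * n) (gen_code n (2 * n) (id_aug n M))
       = twist_map n ` gen_code n (2 * n) (id_aug n M)"
proof -
  have "dual_code (2 * n) (gen_code n (2 * n) (id_aug n M))
      = {y \<in> vecs (2 * n). \<forall>k<n. y k + (\<Sum>j<n. M k j * y (n + j)) = 0}"
    by (simp add: dual_code_gen_code id_aug_row_sum)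
  also have "\<dots> = twist_map n ` range (encode n M)"
    using twist_map_vecs twist_map_encode_parity[OF assms]
      parity_solution_eq_twist_map[OF assms, symmetric]
    by blast
  finally show ?thesis
    by (simp add: gen_code_id_aug)
qed

theorem theorem15:
  fixes M :: "nat \<Rightarrow> nat \<Rightarrow> ('a::{field,finite}) vring" and n :: nat
  assumes "circulant n M"
  shows "isodual (2 * n) (gen_code n (2 * n) (id_aug n M))
       \<and> formally_self_dual (2 * n) (gen_code n (2 * n) (id_aug n M))"
proof -
  let ?C = "gen_code n (2 * n) (id_aug n M)"
  have code: "linear_code (2 * n) ?C"
    by (rule linear_code_gen_code)
  have dual: "dual_code (2 * n) ?C = twist_map n ` ?C"
    by (rule dual_code_id_aug_circulant[OF assms])
  have "inj_on (twist_map n) ?C"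
    using inj_on_twist_map by (rule inj_on_subset) (use code in \<open>simp add: linear_code_def\<close>)
  then have "formally_self_dual (2 * n) ?C"
    using dual lee_weight_twist_map by (intro formally_self_dual_if_dual_eq_image) auto
  moreover have "equiv_codes (2 * n) ?C (dual_code (2 * n) ?C)"
    unfolding dual by (rule equiv_codes_twist_map_image)
  ultimately show ?thesis
    using code by (simp add: isodual_def)
qed

end
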